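(* Let $b$ be a slowly varying function satisfying $\lim_{t\to0^+}b(t)\in(0,\infty)$, and extend $b$ to all of $\mathbb{R}$ by putting $b(s)=\lim_{t\to0^+}b(t)$ for $s\in(-\infty,0]$. Then for every $t_0\in\mathbb{R}$ there is a constant $C>0$ such that for every $t_1\in[-t_0,t_0]$ the function $b_{t_1}(t)=b(t-t_1)$, $t\in(0,\infty)$, satisfies \[C^{-1}\le\frac{b_{t_1}(t)}{b(t)}\le C\quad\text{for every }t\in(0,\infty).\] In particular, $b_{t_1}$ is a slowly varying function for every choice of $t_1\in\mathbb{R}$.
   Context: A measurable function $b:(0,\infty)\to(0,\infty)$ is called slowly varying if for every $\varepsilon>0$ there exist a non-decreasing function $b_\varepsilon$ and a non-increasing function $b_{-\varepsilon}$ on $(0,\infty)$ such that $t^{\varepsilon}b(t)\approx b_\varepsilon(t)$ and $t^{-\varepsilon}b(t)\approx b_{-\varepsilon}(t)$ on $(0,\infty)$, where $f\approx g$ means $C^{-1}g\le f\le Cg$ for some constant $C\ge1$ independent of the argument. Measurability is with respect to Lebesgue measure. *)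

theory Defs
  imports "HOL-Analysis.Analysis"
begin

definition approx_on :: "real set \<Rightarrow> (real \<Rightarrow> real) \<Rightarrow> (real \<Rightarrow> real) \<Rightarrow> bool" where
  "approx_on S f g \<longleftrightarrow> (\<exists>C\<ge>1. \<forall>t\<in>S. g t / C \<le> f t \<and> f t \<le> C * g t)"

definition slowly_varying :: "(real \<Rightarrow> real) \<Rightarrow> bool" where
  "slowly_varying b \<longleftrightarrow>
     b \<in> borel_measurable (restrict_space lebesgue {0<..}) \<and>
     (\<forall>t>0. b t > 0) \<and>
     (\<forall>\<epsilon>>0.
        (\<exists>bp. mono_on {0<..} bp \<and> approx_on {0<..} (\<lambda>t. t powr \<epsilon> * b t) bp) \<and>
        (\<exists>bm. antimono_on {0<..} bm \<and> approx_on {0<..} (\<lambda>t. t powr (-\<epsilon>) * b t) bm))"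

definition extend_left :: "(real \<Rightarrow> real) \<Rightarrow> real \<Rightarrow> real \<Rightarrow> real" where
  "extend_left b L s = (if 0 < s then b s else L)"

end

theory Submission
  imports Defs
begin

text \<open>
  Taking \<open>\<epsilon> = 1\<close> in the definition, \<open>t * b t\<close> is almost increasing and \<open>b t / t\<close> almost
  decreasing, so \<open>b s \<le> K * R * b t\<close> whenever \<open>s / t\<close> and \<open>t / s\<close> are at most \<open>R\<close>.
  For \<open>t \<ge> 2 * \<bar>t\<^sub>1\<bar>\<close> the points \<open>t\<close> and \<open>t - t\<^sub>1\<close> have ratio at most 2. For smaller \<open>t\<close>
  both points lie in a half-line \<open>(-\<infinity>, M]\<close>, on which the extended function is bounded
  above and below by positive constants: near \<open>0\<close> by the limit \<open>L\<close>, away from \<open>0\<close> by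
  comparison with a fixed point. Finally, a measurable function comparable to a slowly
  varying one is slowly varying, since \<open>\<approx>\<close> is transitive and stable under multiplication
  by \<open>t powr \<epsilon>\<close>.
\<close>

lemma approx_on_trans:
  assumes "approx_on S f g" and "approx_on S g h"
  shows "approx_on S f h"
proof -
  obtain C where C: "C \<ge> 1" "\<forall>t\<in>S. g t / C \<le> f t \<and> f t \<le> C * g t"
    using assms(1) unfolding approx_on_def by blast
  obtain D where D: "D \<ge> 1" "\<forall>t\<in>S. h t / D \<le> g t \<and> g t \<le> D * h t"
    using assms(2) unfolding approx_on_def by blast
  have "h t / (C * D) \<le> f t \<and> f t \<le> (C * D) * h t" if "t \<in> S" for t
  proof
    have "h t / D \<le> g t" using D(2) that by blast
    then have "h t / (C * D) \<le> g t / C"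
      using divide_right_mono[of "h t / D" "g t" C] C(1) by (simp add: mult.commute)
    also have "\<dots> \<le> f t" using C(2) that by blast
    finally show "h t / (C * D) \<le> f t" .
    have "f t \<le> C * g t" using C(2) that by blast
    also have "\<dots> \<le> C * (D * h t)" using D(2) that C(1) by simp
    finally show "f t \<le> (C * D) * h t" by (simp add: mult.assoc)
  qed
  moreover have "C * D \<ge> 1" using C(1) D(1) by (metis mult_mono' mult_1 zero_le_one)
  ultimately show ?thesis unfolding approx_on_def by blast
qed

lemma approx_on_mult_left:
  assumes "approx_on S f g" and "\<And>t. t \<in> S \<Longrightarrow> 0 \<le> h t"
  shows "approx_on S (\<lambda>t. h t * f t) (\<lambda>t. h t * g t)"
proof -
  obtain C where "C \<ge> 1" "\<forall>t\<in>S. g t / C \<le> f t \<and> f t \<le> C * g t"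
    using assms(1) unfolding approx_on_def by blast
  then have "h t * g t / C \<le> h t * f t \<and> h t * f t \<le> C * (h t * g t)" if "t \<in> S" for t
    using that assms(2)[OF that] mult_left_mono[of "g t / C" "f t" "h t"]
      mult_left_mono[of "f t" "C * g t" "h t"]
    by (simp add: mult.left_commute)
  with \<open>C \<ge> 1\<close> show ?thesis unfolding approx_on_def by blast
qed

lemma approx_on_mono_on_imp_almost_mono:
  assumes "approx_on S f g" and "mono_on S g"
  obtains C where "C > 0" "\<And>s t. s \<in> S \<Longrightarrow> t \<in> S \<Longrightarrow> s \<le> t \<Longrightarrow> f s \<le> C * f t"
proof -
  obtain C where C: "C \<ge> 1" "\<forall>t\<in>S. g t / C \<le> f t \<and> f t \<le> C * g t"
    using assms(1) unfolding approx_on_def by blast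
  have "f s \<le> C\<^sup>2 * f t" if "s \<in> S" "t \<in> S" "s \<le> t" for s t
  proof -
    have "f s \<le> C * g s" using C(2) that by blast
    also have "\<dots> \<le> C * g t" using assms(2) that C(1) by (simp add: mono_onD)
    also have "\<dots> \<le> C * (C * f t)" using C that by (simp add: divide_le_eq mult.commute)
    finally show ?thesis by (simp add: power2_eq_square mult.assoc)
  qed
  moreover have "C\<^sup>2 > 0" using C(1) by simp
  ultimately show thesis using that by blast
qed

lemma approx_on_antimono_on_imp_almost_antimono:
  assumes "approx_on S f g" and "antimono_on S g"
  obtains C where "C > 0" "\<And>s t. s \<in> S \<Longrightarrow> t \<in> S \<Longrightarrow> s \<le> t \<Longrightarrow> f t \<le> C * f s"
proof -
  obtain C where C: "C \<ge> 1" "\<forall>t\<in>S. g t / C \<le> f t \<and> f t \<le> C * g t"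
    using assms(1) unfolding approx_on_def by blast
  have "f t \<le> C\<^sup>2 * f s" if "s \<in> S" "t \<in> S" "s \<le> t" for s t
  proof -
    have "f t \<le> C * g t" using C(2) that by blast
    also have "\<dots> \<le> C * g s" using monotone_onD[OF assms(2) that] C(1) by simp
    also have "\<dots> \<le> C * (C * f s)" using C that by (simp add: divide_le_eq mult.commute)
    finally show ?thesis by (simp add: power2_eq_square mult.assoc)
  qed
  moreover have "C\<^sup>2 > 0" using C(1) by simp
  ultimately show thesis using that by blast
qed

lemma slowly_varying_pos: "slowly_varying b \<Longrightarrow> 0 < t \<Longrightarrow> 0 < b t"
  unfolding slowly_varying_def by blast

lemma slowly_varying_comparable:
  assumes sv: "slowly_varying b"
  obtains K where "K > 0"
    "\<And>R s t. 0 < s \<Longrightarrow> 0 < t \<Longrightarrow> s \<le> R * t \<Longrightarrow> t \<le> R * s \<Longrightarrow> b s \<le> K * R * b t"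
proof -
  obtain bp bm where
    bp: "mono_on {0<..} bp" "approx_on {0<..} (\<lambda>t. t powr 1 * b t) bp" and
    bm: "antimono_on {0<..} bm" "approx_on {0<..} (\<lambda>t. t powr (-1) * b t) bm"
    using sv zero_less_one unfolding slowly_varying_def by blast
  obtain Cp where "Cp > 0" and
    Cp': "\<And>s t. s \<in> {0<..} \<Longrightarrow> t \<in> {0<..} \<Longrightarrow> s \<le> t \<Longrightarrow> s powr 1 * b s \<le> Cp * (t powr 1 * b t)"
    using approx_on_mono_on_imp_almost_mono[OF bp(2,1)] by blast
  have Cp: "s * b s \<le> Cp * (t * b t)" if "0 < s" "s \<le> t" for s t
    using Cp'[of s t] that by simp
  obtain Cm where "Cm > 0" and
    Cm': "\<And>s t. s \<in> {0<..} \<Longrightarrow> t \<in> {0<..} \<Longrightarrow> s \<le> t \<Longrightarrow> t powr (-1) * b t \<le> Cm * (s powr (-1) * b s)"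
    using approx_on_antimono_on_imp_almost_antimono[OF bm(2,1)] by blast
  have Cm: "b t / t \<le> Cm * (b s / s)" if "0 < s" "s \<le> t" for s t
    using Cm'[of s t] that by (simp add: powr_minus divide_inverse mult.commute)
  have "b s \<le> (Cp + Cm) * R * b t" if st: "0 < s" "0 < t" "s \<le> R * t" "t \<le> R * s" for R s t
  proof (cases "s \<le> t")
    case True
    have "b s \<le> Cp * (t / s) * b t" using Cp[OF st(1) True] st(1) by (simp add: field_simps)
    also have "\<dots> \<le> (Cp + Cm) * R * b t"
      using st \<open>Cp > 0\<close> \<open>Cm > 0\<close> slowly_varying_pos[OF sv st(2)]
      by (intro mult_right_mono mult_mono) (simp_all add: divide_le_eq)
    finally show ?thesis .
  next
    case False
    have "b s \<le> Cm * (s / t) * b t" using Cm[of t s] False st(1,2) by (simp add: field_simps)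
    also have "\<dots> \<le> (Cp + Cm) * R * b t"
      using st \<open>Cp > 0\<close> \<open>Cm > 0\<close> slowly_varying_pos[OF sv st(2)]
      by (intro mult_right_mono mult_mono) (simp_all add: divide_le_eq)
    finally show ?thesis .
  qed
  moreover have "Cp + Cm > 0" using \<open>Cp > 0\<close> \<open>Cm > 0\<close> by simp
  ultimately show thesis using that by blast
qed

lemma slowly_varying_bounded_on_interval:
  assumes sv: "slowly_varying b" and "0 < a"
  obtains m U where "0 < m" "\<And>s. a \<le> s \<Longrightarrow> s \<le> M \<Longrightarrow> m \<le> b s \<and> b s \<le> U"
proof -
  obtain K where "K > 0" and K:
    "\<And>R s t. 0 < s \<Longrightarrow> 0 < t \<Longrightarrow> s \<le> R * t \<Longrightarrow> t \<le> R * s \<Longrightarrow> b s \<le> K * R * b t"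
    using slowly_varying_comparable[OF sv] by blast
  define R where "R = max 1 (M / a)"
  have "R \<ge> 1" by (simp add: R_def)
  have "b s \<le> K * R * b a \<and> b a \<le> K * R * b s" if "a \<le> s" "s \<le> M" for s
  proof -
    have "M \<le> R * a"
      using \<open>0 < a\<close> mult_right_mono[OF max.cobounded2[of "M / a" 1], of a] by (simp add: R_def)
    then have "s \<le> R * a" using that by linarith
    moreover have "a \<le> R * s"
      using that \<open>0 < a\<close> \<open>R \<ge> 1\<close> mult_right_mono[of 1 R s] by linarith
    ultimately show ?thesis using K \<open>0 < a\<close> that by auto
  qed
  moreover have "0 < K * R" using \<open>K > 0\<close> \<open>R \<ge> 1\<close> by simp
  ultimately have "b a / (K * R) \<le> b s \<and> b s \<le> K * R * b a" if "a \<le> s" "s \<le> M" for s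
    using that by (simp add: pos_divide_le_eq mult.commute)
  moreover have "0 < b a / (K * R)"
    using slowly_varying_pos[OF sv \<open>0 < a\<close>] \<open>0 < K * R\<close> by simp
  ultimately show thesis using that by blast
qed

lemma extend_left_bounded_atMost:
  assumes sv: "slowly_varying b" and lim: "(b \<longlongrightarrow> L) (at_right 0)" and "0 < L"
  obtains m U where "0 < m" "\<And>s. s \<le> M \<Longrightarrow> m \<le> extend_left b L s \<and> extend_left b L s \<le> U"
proof -
  have "\<forall>\<^sub>F t in at_right 0. L / 2 < b t \<and> b t < 2 * L"
    using order_tendstoD[OF lim, of "L / 2"] order_tendstoD[OF lim, of "2 * L"] \<open>0 < L\<close>
    by (auto elim: eventually_elim2)
  then obtain d where "d > 0" and near_zero: "\<And>t. 0 < t \<Longrightarrow> t < d \<Longrightarrow> L / 2 < b t \<and> b t < 2 * L"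
    unfolding eventually_at_right_field by auto
  obtain m U where "0 < m" and away_from_zero: "\<And>s. d \<le> s \<Longrightarrow> s \<le> M \<Longrightarrow> m \<le> b s \<and> b s \<le> U"
    using slowly_varying_bounded_on_interval[OF sv \<open>d > 0\<close>] by blast
  have "min (L / 2) m \<le> extend_left b L s \<and> extend_left b L s \<le> max (2 * L) U" if "s \<le> M" for s
  proof -
    consider "s \<le> 0" | "0 < s" "s < d" | "d \<le> s" by linarith
    then show ?thesis
    proof cases
      case 1
      then show ?thesis using \<open>0 < L\<close> by (simp add: extend_left_def min_le_iff_disj le_max_iff_disj)
    next
      case 2
      then show ?thesis using near_zero[of s] by (simp add: extend_left_def min_le_iff_disj le_max_iff_disj)
    next
      case 3
      then show ?thesis using away_from_zero[of s] that \<open>d > 0\<close>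
        by (simp add: extend_left_def min_le_iff_disj le_max_iff_disj)
    qed
  qed
  moreover have "0 < min (L / 2) m" using \<open>0 < L\<close> \<open>0 < m\<close> by simp
  ultimately show thesis using that by blast
qed

lemma extend_left_shift_comparable:
  assumes sv: "slowly_varying b" and lim: "(b \<longlongrightarrow> L) (at_right 0)" and "0 < L"
  obtains C where "C \<ge> 1" "\<And>t1 t. \<bar>t1\<bar> \<le> a \<Longrightarrow> 0 < t \<Longrightarrow>
      extend_left b L (t - t1) \<le> C * b t \<and> b t \<le> C * extend_left b L (t - t1)"
proof -
  obtain K where "K > 0" and K:
    "\<And>R s t. 0 < s \<Longrightarrow> 0 < t \<Longrightarrow> s \<le> R * t \<Longrightarrow> t \<le> R * s \<Longrightarrow> b s \<le> K * R * b t"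
    using slowly_varying_comparable[OF sv] by blast
  obtain m U where "0 < m" and bounds:
    "\<And>s. s \<le> 3 * a \<Longrightarrow> m \<le> extend_left b L s \<and> extend_left b L s \<le> U"
    using extend_left_bounded_atMost[OF sv lim \<open>0 < L\<close>] by blast
  define C where "C = max 1 (max (2 * K) (U / m))"
  have "extend_left b L (t - t1) \<le> C * b t \<and> b t \<le> C * extend_left b L (t - t1)"
    if "\<bar>t1\<bar> \<le> a" "0 < t" for t1 t
  proof (cases "2 * a \<le> t")
    case True
    have s: "0 < t - t1" "t - t1 \<le> 2 * t" "t \<le> 2 * (t - t1)" using True that by auto
    have "b (t - t1) \<le> 2 * K * b t" "b t \<le> 2 * K * b (t - t1)"
      using K[of "t - t1" t 2] K[of t "t - t1" 2] s that by (auto simp: mult.commute)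
    moreover have "2 * K \<le> C" by (simp add: C_def)
    ultimately show ?thesis
      using s slowly_varying_pos[OF sv] that
      by (auto simp: extend_left_def intro: order_trans mult_right_mono)
  next
    case False
    have "m \<le> b t" "b t \<le> U" "m \<le> extend_left b L (t - t1)" "extend_left b L (t - t1) \<le> U"
      using bounds[of t] bounds[of "t - t1"] False that by (auto simp: extend_left_def)
    moreover have "U \<le> C * m"
    proof -
      have "U / m \<le> C" by (simp add: C_def)
      then show ?thesis using \<open>0 < m\<close> by (simp add: divide_le_eq)
    qed
    moreover have "C \<ge> 0" by (simp add: C_def)
    ultimately show ?thesis
      using mult_left_mono[of m "b t" C] mult_left_mono[of m "extend_left b L (t - t1)" C] by linarith
  qed
  moreover have "C \<ge> 1" by (simp add: C_def)
  ultimately show thesis using that by blast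
qed

lemma extend_left_shift_measurable:
  assumes "b \<in> borel_measurable (restrict_space lebesgue {0<..})"
  shows "(\<lambda>t. extend_left b L (t - t1)) \<in> borel_measurable lebesgue"
proof -
  have "extend_left b L \<in> borel_measurable lebesgue"
    using assms measurable_restrict_space_iff[of "{0<..}" lebesgue L borel b]
    by (simp add: extend_left_def[abs_def])
  moreover have "(\<lambda>t::real. t - t1) \<in> lebesgue \<rightarrow>\<^sub>M lebesgue"
    using lebesgue_affine_measurable[where c = "\<lambda>_::real. 1" and t = "- t1"] by simp
  ultimately show ?thesis by (rule measurable_compose_rev)
qed

lemma slowly_varying_approx_on:
  assumes sv: "slowly_varying b"
    and meas: "f \<in> borel_measurable (restrict_space lebesgue {0<..})"
    and approx: "approx_on {0<..} f b"
  shows "slowly_varying f"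
proof -
  have "0 < f t" if "0 < t" for t
  proof -
    obtain C where "C \<ge> 1" "b t / C \<le> f t" using approx \<open>0 < t\<close> unfolding approx_on_def by auto
    then show ?thesis using slowly_varying_pos[OF sv \<open>0 < t\<close>] by (smt (verit) divide_pos_pos)
  qed
  moreover have
    "(\<exists>bp. mono_on {0<..} bp \<and> approx_on {0<..} (\<lambda>t. t powr \<epsilon> * f t) bp) \<and>
     (\<exists>bm. antimono_on {0<..} bm \<and> approx_on {0<..} (\<lambda>t. t powr (-\<epsilon>) * f t) bm)"
    if "0 < \<epsilon>" for \<epsilon>
  proof -
    obtain bp bm where
      bp: "mono_on {0<..} bp" "approx_on {0<..} (\<lambda>t. t powr \<epsilon> * b t) bp" and
      bm: "antimono_on {0<..} bm" "approx_on {0<..} (\<lambda>t. t powr (-\<epsilon>) * b t) bm"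
      using sv \<open>0 < \<epsilon>\<close> unfolding slowly_varying_def by blast
    have "approx_on {0<..} (\<lambda>t. t powr e * f t) (\<lambda>t. t powr e * b t)" for e
      by (rule approx_on_mult_left[OF approx]) simp
    then show ?thesis using bp bm approx_on_trans by blast
  qed
  ultimately show ?thesis using meas unfolding slowly_varying_def by blast
qed

lemma slowly_varying_extend_left_shift:
  assumes sv: "slowly_varying b" and lim: "(b \<longlongrightarrow> L) (at_right 0)" and "0 < L"
  shows "slowly_varying (\<lambda>t. extend_left b L (t - t1))"
proof (rule slowly_varying_approx_on[OF sv])
  obtain C where "C \<ge> 1" and C: "\<And>t' t. \<bar>t'\<bar> \<le> \<bar>t1\<bar> \<Longrightarrow> 0 < t \<Longrightarrow>
      extend_left b L (t - t') \<le> C * b t \<and> b t \<le> C * extend_left b L (t - t')"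
    using extend_left_shift_comparable[OF assms, of "\<bar>t1\<bar>"] by blast
  have "b t / C \<le> extend_left b L (t - t1)" if "0 < t" for t
    using C[OF order_refl that] \<open>C \<ge> 1\<close> by (simp add: divide_le_eq mult.commute)
  then show "approx_on {0<..} (\<lambda>t. extend_left b L (t - t1)) b"
    unfolding approx_on_def using C[OF order_refl] \<open>C \<ge> 1\<close> by auto
  have "b \<in> borel_measurable (restrict_space lebesgue {0<..})"
    using sv unfolding slowly_varying_def by blast
  then show "(\<lambda>t. extend_left b L (t - t1)) \<in> borel_measurable (restrict_space lebesgue {0<..})"
    by (rule measurable_restrict_space1[OF extend_left_shift_measurable])
qed

lemma ratio_bounds_if_comparable:
  fixes x y C :: real
  assumes "0 < y" "0 < C" "x \<le> C * y" "y \<le> C * x"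
  shows "1 / C \<le> x / y \<and> x / y \<le> C"
  using assms by (simp add: le_divide_eq divide_le_eq mult.commute)

theorem lemma3p2:
  fixes b :: "real \<Rightarrow> real" and L :: real
  assumes "slowly_varying b"
    and "(b \<longlongrightarrow> L) (at_right 0)"
    and "0 < L"
  shows "(\<forall>t0::real. \<exists>C>0. \<forall>t1\<in>{-t0..t0}. \<forall>t>0.
            1 / C \<le> extend_left b L (t - t1) / b t \<and> extend_left b L (t - t1) / b t \<le> C)
       \<and> (\<forall>t1::real. slowly_varying (\<lambda>t. extend_left b L (t - t1)))"
proof (intro conjI allI)
  fix t0 :: real
  obtain C where "C \<ge> 1" and C: "\<And>t1 t. \<bar>t1\<bar> \<le> \<bar>t0\<bar> \<Longrightarrow> 0 < t \<Longrightarrow>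
      extend_left b L (t - t1) \<le> C * b t \<and> b t \<le> C * extend_left b L (t - t1)"
    using extend_left_shift_comparable[OF assms, of "\<bar>t0\<bar>"] by blast
  have "1 / C \<le> extend_left b L (t - t1) / b t \<and> extend_left b L (t - t1) / b t \<le> C"
    if "t1 \<in> {-t0..t0}" "0 < t" for t1 t
    using C[of t1 t] that \<open>C \<ge> 1\<close>
    by (intro ratio_bounds_if_comparable slowly_varying_pos[OF assms(1)]) auto
  then show "\<exists>C>0. \<forall>t1\<in>{-t0..t0}. \<forall>t>0.
      1 / C \<le> extend_left b L (t - t1) / b t \<and> extend_left b L (t - t1) / b t \<le> C"
    using \<open>C \<ge> 1\<close> by (intro exI[of _ C]) auto
next
  fix t1 :: real
  show "slowly_varying (\<lambda>t. extend_left b L (t - t1))"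
    by (rule slowly_varying_extend_left_shift[OF assms])
qed

end
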